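(* Let $\lambda\in D\setminus\{0\}$ and put $\widetilde g^\lambda(z)=\sum_{m=0}^\infty\lambda^{\sigma_\infty(m)}z^m$ for $z\in D$. Then \[ \mathcal{F}\big(\widetilde g^\lambda-1\big)=\frac{\widetilde g^\lambda-1}{\lambda}+\Big(\lambda-\frac1\lambda\Big)z . \]
   Context: $T$ is the Collatz map $T(n)=\frac{3n+1}2$ ($n$ odd), $T(n)=\frac n2$ ($n$ even). The total stopping time $\sigma_\infty(n)$, for a positive integer $n$, is the least $k\ge0$ with $T^k(n)=1$ (and $\sigma_\infty(n)=\infty$ if no such $k$ exists); also $\sigma_\infty(0):=0$. Convention: $\lambda^\infty=0$ for $|\lambda|<1$. $D$ is the open unit disk, $A(D)$ the holomorphic functions on $D$, and $\mathcal{F}$ the operator on $A(D)$ given by $\mathcal{F}\big(\sum_{n\ge0}a_nz^n\big)=\sum_{n\ge0}a_nz^{2n}+\sum_{k\ge0}a_{3k+2}z^{2k+1}$. *)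

theory Defs
  imports "HOL-Complex_Analysis.Complex_Analysis" "HOL-Library.Extended_Nat"
begin

definition collatzT :: "nat \<Rightarrow> nat" where
  "collatzT n = (if odd n then (3 * n + 1) div 2 else n div 2)"

text \<open>Total stopping time; infinity if the orbit never hits 1; sigma(0) = 0 by convention.\<close>
definition sigma_inf :: "nat \<Rightarrow> enat" where
  "sigma_inf n = (if n = 0 then 0
     else if (\<exists>k. (collatzT ^^ k) n = 1) then enat (LEAST k. (collatzT ^^ k) n = 1)
     else \<infinity>)"

definition epow :: "complex \<Rightarrow> enat \<Rightarrow> complex" where
  "epow l e = (case e of enat k \<Rightarrow> l ^ k | \<infinity> \<Rightarrow> 0)"

definition gtilde :: "complex \<Rightarrow> complex \<Rightarrow> complex" where
  "gtilde l z = (\<Sum>m. epow l (sigma_inf m) * z ^ m)"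

definition taylor_coeff :: "(complex \<Rightarrow> complex) \<Rightarrow> nat \<Rightarrow> complex" where
  "taylor_coeff f n = (deriv ^^ n) f 0 / fact n"

definition opF :: "(complex \<Rightarrow> complex) \<Rightarrow> complex \<Rightarrow> complex" where
  "opF f z = (\<Sum>n. taylor_coeff f n * z ^ (2 * n))
            + (\<Sum>k. taylor_coeff f (3 * k + 2) * z ^ (2 * k + 1))"

end

theory Submission
  imports Defs
begin

text \<open>
  Write \<open>g\<^sub>\<lambda>(z) - 1 = \<Sum>\<^sub>m a\<^sub>m z\<^sup>m\<close>, so \<open>a\<^sub>m = \<lambda>\<^bsup>\<sigma>\<^sub>\<infinity>(m)\<^esup>\<close> for \<open>m \<ge> 1\<close> and \<open>a\<^sub>0 = 0\<close>.
  The operator \<open>\<F>\<close> sends a power series with coefficients \<open>a\<^sub>m\<close> to the one whose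
  \<open>m\<close>-th coefficient is \<open>a\<^bsub>m/2\<^esub>\<close> for even \<open>m\<close> and \<open>a\<^bsub>(3m+1)/2\<^esub>\<close> for odd \<open>m\<close>, i.e. \<open>a\<^bsub>T(m)\<^esub>\<close>.
  Since \<open>\<sigma>\<^sub>\<infinity>(m) = 1 + \<sigma>\<^sub>\<infinity>(T(m))\<close> for \<open>m \<ge> 2\<close>, this is \<open>a\<^sub>m / \<lambda>\<close>; the only exception
  is \<open>m = 1\<close>, where \<open>a\<^bsub>T(1)\<^esub> = a\<^sub>2 = \<lambda>\<close> instead of \<open>a\<^sub>1 / \<lambda> = 1/\<lambda>\<close>, which gives the linear
  correction term.
\<close>

lemma collatzT_neq_0: "n \<noteq> 0 \<Longrightarrow> collatzT n \<noteq> 0"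
  unfolding collatzT_def by auto

lemma sigma_inf_step:
  assumes "n \<ge> 2"
  shows "sigma_inf n = eSuc (sigma_inf (collatzT n))"
proof -
  have Tn: "collatzT n \<noteq> 0" using collatzT_neq_0 assms by simp
  have shift: "(collatzT ^^ Suc k) n = (collatzT ^^ k) (collatzT n)" for k
    by (simp add: funpow_Suc_right del: funpow.simps)
  show ?thesis
  proof (cases "\<exists>k. (collatzT ^^ k) n = 1")
    case True
    then obtain k where k: "(collatzT ^^ k) n = 1" by blast
    moreover have "k \<noteq> 0" using k assms by (cases k) auto
    ultimately have reaches: "\<exists>k. (collatzT ^^ k) (collatzT n) = 1"
      using shift by (metis not0_implies_Suc)
    have "(LEAST k. (collatzT ^^ k) n = 1) = Suc (LEAST k. (collatzT ^^ Suc k) n = 1)"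
      by (rule Least_Suc[of "\<lambda>k. (collatzT ^^ k) n = 1", OF k]) (use assms in auto)
    then have "(LEAST k. (collatzT ^^ k) n = 1) = Suc (LEAST k. (collatzT ^^ k) (collatzT n) = 1)"
      by (simp only: shift)
    then show ?thesis
      using True reaches assms Tn by (simp add: sigma_inf_def eSuc_enat)
  next
    case False
    then have "\<not> (\<exists>k. (collatzT ^^ k) (collatzT n) = 1)"
      using shift by metis
    then show ?thesis using False assms Tn by (simp add: sigma_inf_def)
  qed
qed

lemma sigma_inf_1: "sigma_inf 1 = 0"
  unfolding sigma_inf_def by (auto intro!: Least_equality exI[of _ 0] simp: zero_enat_def)

lemma sigma_inf_2: "sigma_inf 2 = 1"
proof -
  have "collatzT 2 = 1" by (simp add: collatzT_def)
  then show ?thesis using sigma_inf_step[of 2] sigma_inf_1 by (simp add: one_eSuc)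
qed

lemma epow_eSuc: "epow l (eSuc e) = l * epow l e"
  by (cases e) (auto simp: epow_def eSuc_enat)

lemma norm_epow_le_one: "norm l \<le> 1 \<Longrightarrow> norm (epow l e) \<le> 1"
  by (cases e) (auto simp: epow_def norm_power power_le_one)

definition gtilde_coeff :: "complex \<Rightarrow> nat \<Rightarrow> complex" where
  "gtilde_coeff l m = epow l (sigma_inf m) - (if m = 0 then 1 else 0)"

lemma gtilde_coeff_0: "gtilde_coeff l 0 = 0"
  by (simp add: gtilde_coeff_def sigma_inf_def epow_def zero_enat_def)

lemma norm_gtilde_coeff_le_one:
  assumes "norm l \<le> 1"
  shows "norm (gtilde_coeff l m) \<le> 1"
  using norm_epow_le_one[OF assms]
  by (cases "m = 0") (simp add: gtilde_coeff_0, simp add: gtilde_coeff_def)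

lemma gtilde_coeff_even: "gtilde_coeff l (2 * n) = l * gtilde_coeff l n"
proof (cases "n = 0")
  case False
  have "collatzT (2 * n) = n" by (simp add: collatzT_def)
  then show ?thesis
    using False sigma_inf_step[of "2 * n"] by (simp add: gtilde_coeff_def epow_eSuc)
qed (simp add: gtilde_coeff_0)

lemma gtilde_coeff_odd:
  "gtilde_coeff l (2 * k + 1) = l * gtilde_coeff l (3 * k + 2) + (if k = 0 then 1 - l\<^sup>2 else 0)"
proof (cases "k = 0")
  case True
  then show ?thesis
    using sigma_inf_1 sigma_inf_2 by (simp add: gtilde_coeff_def epow_def power2_eq_square
        zero_enat_def one_enat_def numeral_2_eq_2)
next
  case False
  have "collatzT (2 * k + 1) = 3 * k + 2" by (simp add: collatzT_def)
  then show ?thesis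
    using False sigma_inf_step[of "2 * k + 1"] by (simp add: gtilde_coeff_def epow_eSuc)
qed

lemma gtilde_coeff_functional_equation:
  assumes "l \<noteq> 0"
  shows "(if even m then gtilde_coeff l (m div 2) else gtilde_coeff l (3 * (m div 2) + 2))
         = gtilde_coeff l m / l + (if m = 1 then l - 1 / l else 0)"
proof (cases "even m")
  case True
  then obtain n where "m = 2 * n" by (auto elim: evenE)
  then show ?thesis using assms gtilde_coeff_even[of l n] by (auto simp: field_simps)
next
  case False
  then obtain k where "m = 2 * k + 1" by (auto elim: oddE)
  then show ?thesis
    using assms gtilde_coeff_odd[of l k] by (auto simp: field_simps power2_eq_square)
qed

lemma summable_norm_power_series_bounded:
  fixes c :: "nat \<Rightarrow> 'a::real_normed_div_algebra"
  assumes "\<And>m. norm (c m) \<le> B" and "norm z < 1"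
  shows "summable (\<lambda>m. norm (c m * z ^ m))"
proof (rule summable_comparison_test)
  show "summable (\<lambda>m. B * norm z ^ m)"
    using assms(2) by (intro summable_mult summable_geometric) simp
  show "\<exists>N. \<forall>m\<ge>N. norm (norm (c m * z ^ m)) \<le> B * norm z ^ m"
    using assms(1) by (auto simp: norm_mult norm_power intro!: mult_right_mono)
qed

lemma gtilde_minus_1_sums:
  assumes "norm l \<le> 1" and "norm z < 1"
  shows "(\<lambda>m. gtilde_coeff l m * z ^ m) sums (gtilde l z - 1)"
proof -
  have "summable (\<lambda>m. epow l (sigma_inf m) * z ^ m)"
    using norm_epow_le_one[OF assms(1)]
    by (rule summable_norm_cancel[OF summable_norm_power_series_bounded[OF _ assms(2)]])
  then have "(\<lambda>m. epow l (sigma_inf m) * z ^ m) sums gtilde l z"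
    unfolding gtilde_def by (rule summable_sums)
  moreover have "(\<lambda>m. if m = 0 then 1 else 0) sums (1 :: complex)"
    using sums_single[of 0 "\<lambda>_. 1 :: complex"] by simp
  ultimately have "(\<lambda>m. epow l (sigma_inf m) * z ^ m - (if m = 0 then 1 else 0)) sums (gtilde l z - 1)"
    by (rule sums_diff)
  moreover have "epow l (sigma_inf m) * z ^ m - (if m = 0 then 1 else 0) = gtilde_coeff l m * z ^ m"
    for m
    by (cases "m = 0") (simp_all add: gtilde_coeff_def left_diff_distrib)
  ultimately show ?thesis
    by simp
qed

lemma taylor_coeff_power_series:
  assumes "r > 0" and sums: "\<And>z. z \<in> ball 0 r \<Longrightarrow> (\<lambda>m. c m * z ^ m) sums f z"
  shows "taylor_coeff f n = c n"
proof -
  have "ereal r \<le> fps_conv_radius (Abs_fps c)"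
    unfolding fps_conv_radius_def
    by (rule conv_radius_geI_ex') (auto intro!: sums_summable[OF sums])
  then have "fps_conv_radius (Abs_fps c) > 0"
    using assms(1) by (auto intro: less_le_trans[rotated])
  moreover have "eventually (\<lambda>z. z \<in> ball 0 r) (nhds 0)"
    using assms(1) by (intro eventually_nhds_in_open) auto
  then have "eventually (\<lambda>z. eval_fps (Abs_fps c) z = f z) (nhds 0)"
    by eventually_elim (simp add: eval_fps_def sums_unique[OF sums])
  ultimately have "f has_fps_expansion Abs_fps c"
    by (simp add: has_fps_expansion_def)
  from fps_nth_fps_expansion[OF this, of n] show ?thesis
    by (simp add: taylor_coeff_def)
qed

lemma sums_interleave:
  fixes f g :: "nat \<Rightarrow> 'a::real_normed_vector"
  assumes "f sums x" and "g sums y"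
  shows "(\<lambda>n. if even n then f (n div 2) else g (n div 2)) sums (x + y)"
proof -
  have "(\<lambda>n. if even n then f (n div 2) else 0) sums x"
    using assms(1) by (subst sums_mono_reindex[of "\<lambda>n. 2 * n", symmetric])
      (auto simp: strict_mono_def elim!: evenE)
  moreover have "(\<lambda>n. if even n then 0 else g (n div 2)) sums y"
    using assms(2) by (subst sums_mono_reindex[of "\<lambda>n. 2 * n + 1", symmetric])
      (auto simp: strict_mono_def elim!: oddE)
  ultimately show ?thesis
    by (rule sums_add[THEN sums_cong[THEN iffD1, rotated]]) simp
qed

lemma opF_power_series:
  assumes sums: "\<And>w. w \<in> ball 0 1 \<Longrightarrow> (\<lambda>m. c m * w ^ m) sums f w"
    and bounded: "\<And>m. norm (c m) \<le> B" and z: "z \<in> ball 0 1"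
  shows "(\<lambda>m. (if even m then c (m div 2) else c (3 * (m div 2) + 2)) * z ^ m) sums opF f z"
proof -
  have taylor: "taylor_coeff f = c"
    using taylor_coeff_power_series[of 1 c f] sums by auto
  have z2: "norm (z\<^sup>2) < 1"
    using z by (simp add: norm_power power_less_one_iff)
  have "summable (\<lambda>n. c n * (z\<^sup>2) ^ n)"
    by (rule summable_norm_cancel[OF summable_norm_power_series_bounded[OF bounded z2]])
  then have even: "(\<lambda>n. c n * z ^ (2 * n)) sums (\<Sum>n. c n * z ^ (2 * n))"
    by (simp add: power_mult summable_sums)
  have "summable (\<lambda>k. c (3 * k + 2) * (z\<^sup>2) ^ k)"
    by (rule summable_norm_cancel[OF summable_norm_power_series_bounded[OF bounded z2]])
  then have "summable (\<lambda>k. c (3 * k + 2) * (z\<^sup>2) ^ k * z)"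
    by (rule summable_mult2)
  moreover have "(\<lambda>k. c (3 * k + 2) * (z\<^sup>2) ^ k * z) = (\<lambda>k. c (3 * k + 2) * z ^ (2 * k + 1))"
    by (simp add: fun_eq_iff power_add mult.assoc flip: power_mult)
  ultimately have odd: "(\<lambda>k. c (3 * k + 2) * z ^ (2 * k + 1)) sums (\<Sum>k. c (3 * k + 2) * z ^ (2 * k + 1))"
    by (simp add: summable_sums)
  have "(if even m then c (m div 2) * z ^ (2 * (m div 2))
          else c (3 * (m div 2) + 2) * z ^ (2 * (m div 2) + 1))
        = (if even m then c (m div 2) else c (3 * (m div 2) + 2)) * z ^ m" for m
    by (cases "even m") (auto elim!: evenE oddE)
  with sums_interleave[OF even odd] show ?thesis
    unfolding opF_def taylor by simp
qed

theorem mainTheorem10: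
  fixes l :: complex
  assumes "l \<in> ball 0 1" and "l \<noteq> 0"
  shows "\<forall>z \<in> ball 0 1.
           opF (\<lambda>w. gtilde l w - 1) z = (gtilde l z - 1) / l + (l - 1 / l) * z"
proof
  fix z :: complex
  assume z: "z \<in> ball 0 1"
  have l: "norm l \<le> 1" using assms(1) by simp
  let ?a = "gtilde_coeff l"
  have "(\<lambda>m. (if even m then ?a (m div 2) else ?a (3 * (m div 2) + 2)) * z ^ m)
          sums opF (\<lambda>w. gtilde l w - 1) z"
    using gtilde_minus_1_sums[OF l] norm_gtilde_coeff_le_one[OF l] z
    by (intro opF_power_series) auto
  also have "(\<lambda>m. (if even m then ?a (m div 2) else ?a (3 * (m div 2) + 2)) * z ^ m)
      = (\<lambda>m. ?a m * z ^ m / l + (if m = 1 then (l - 1 / l) * z ^ m else 0))"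
    by (auto simp: fun_eq_iff gtilde_coeff_functional_equation[OF assms(2)] distrib_right)
  finally have "(\<lambda>m. ?a m * z ^ m / l + (if m = 1 then (l - 1 / l) * z ^ m else 0))
      sums opF (\<lambda>w. gtilde l w - 1) z" .
  moreover have "(\<lambda>m. ?a m * z ^ m / l + (if m = 1 then (l - 1 / l) * z ^ m else 0))
          sums ((gtilde l z - 1) / l + (l - 1 / l) * z ^ 1)"
    using gtilde_minus_1_sums[OF l] z by (intro sums_add sums_divide sums_single) auto
  ultimately show "opF (\<lambda>w. gtilde l w - 1) z = (gtilde l z - 1) / l + (l - 1 / l) * z"
    by (simp add: sums_unique2)
qed

end
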